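(* Let $G$ be a graph with a bramble $\mathcal{B}$ and let $\ell$ be a nonnegative integer. Let $S$ and $T$ be subsets of $V(G)$ such that $\mathcal{B}_S$ and $\mathcal{B}_T$ both have order at least $\ell$. Then there are $\ell$ pairwise vertex-disjoint paths in $G$ from $S$ to $T$.
   Context: All graphs are finite and simple. A bramble $\mathcal{B}$ in a graph $G$ is a family of connected subgraphs of $G$ such that every two of them share a vertex or are joined by an edge of $G$. A hitting set for $\mathcal{B}$ is a set of vertices intersecting every element of $\mathcal{B}$; the order of $\mathcal{B}$ is the minimum size of a hitting set. Any subset of a bramble is a bramble. For $X\subseteq V(G)$, $\mathcal{B}_X$ denotes the set of elements of $\mathcal{B}$ that intersect $X$. *)

theory Defs
  imports Main
begin

definition graph :: "'a set \<Rightarrow> ('a \<Rightarrow> 'a \<Rightarrow> bool) \<Rightarrow> bool" where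
  "graph V E \<longleftrightarrow> finite V \<and> (\<forall>u v. E u v \<longrightarrow> u \<in> V \<and> v \<in> V \<and> E v u \<and> u \<noteq> v)"

definition connected_set :: "'a set \<Rightarrow> ('a \<Rightarrow> 'a \<Rightarrow> bool) \<Rightarrow> 'a set \<Rightarrow> bool" where
  "connected_set V E X \<longleftrightarrow> X \<noteq> {} \<and> X \<subseteq> V \<and>
     (\<forall>u\<in>X. \<forall>v\<in>X. (\<lambda>x y. x \<in> X \<and> y \<in> X \<and> E x y)\<^sup>*\<^sup>* u v)"

definition touch :: "('a \<Rightarrow> 'a \<Rightarrow> bool) \<Rightarrow> 'a set \<Rightarrow> 'a set \<Rightarrow> bool" where
  "touch E X Y \<longleftrightarrow> X \<inter> Y \<noteq> {} \<or> (\<exists>x\<in>X. \<exists>y\<in>Y. E x y)"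

text \<open>A bramble, each element represented by its (connected) vertex set.\<close>
definition bramble :: "'a set \<Rightarrow> ('a \<Rightarrow> 'a \<Rightarrow> bool) \<Rightarrow> 'a set set \<Rightarrow> bool" where
  "bramble V E B \<longleftrightarrow> (\<forall>X\<in>B. connected_set V E X) \<and> (\<forall>X\<in>B. \<forall>Y\<in>B. touch E X Y)"

definition hitting_set :: "'a set \<Rightarrow> 'a set set \<Rightarrow> 'a set \<Rightarrow> bool" where
  "hitting_set V B H \<longleftrightarrow> H \<subseteq> V \<and> (\<forall>X\<in>B. X \<inter> H \<noteq> {})"

definition bramble_order :: "'a set \<Rightarrow> 'a set set \<Rightarrow> nat" where
  "bramble_order V B = (LEAST k. \<exists>H. hitting_set V B H \<and> card H = k)"

definition bramble_restr :: "'a set set \<Rightarrow> 'a set \<Rightarrow> 'a set set" where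
  "bramble_restr B X = {Y \<in> B. Y \<inter> X \<noteq> {}}"

definition is_path :: "'a set \<Rightarrow> ('a \<Rightarrow> 'a \<Rightarrow> bool) \<Rightarrow> 'a list \<Rightarrow> bool" where
  "is_path V E p \<longleftrightarrow> p \<noteq> [] \<and> distinct p \<and> set p \<subseteq> V \<and>
     (\<forall>i. Suc i < length p \<longrightarrow> E (p ! i) (p ! Suc i))"

definition path_from_to :: "'a set \<Rightarrow> ('a \<Rightarrow> 'a \<Rightarrow> bool) \<Rightarrow> 'a set \<Rightarrow> 'a set \<Rightarrow> 'a list \<Rightarrow> bool" where
  "path_from_to V E S T p \<longleftrightarrow> is_path V E p \<and> set p \<inter> S = {hd p} \<and> set p \<inter> T = {last p}"

end

theory Submission
  imports Defs "HOL-Library.Disjoint_Sets"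
begin

(* If X has fewer than l vertices, it hits neither all of B_S nor all of B_T, so some A in B_S
   and some C in B_T avoid X. As A and C are connected and touch, A u C contains an S-T walk
   avoiding X. Hence no set of fewer than l vertices separates S from T, and Menger's theorem
   yields l disjoint S-T paths.

   Menger's theorem is proved by induction on the number of edges (it never uses symmetry of E).
   Pick an edge xy. If S and T still cannot be separated by fewer than k vertices in G - xy,
   induction applies directly. Otherwise G - xy has an S-T separator Y with |Y| < k; then Y + x
   and Y + y separate S from T in G, so both have exactly k vertices. By induction G - xy has
   k disjoint paths from S to Y + x and k disjoint paths from Y + y to T. As Y separates S from T
   in G - xy, a path of the first system meets a path of the second only in a vertex of Y that
   ends the one and starts the other, so the two systems can be joined along Y and across xy. *)

section \<open>Walks\<close>

definition walk :: "('a \<Rightarrow> 'a \<Rightarrow> bool) \<Rightarrow> 'a list \<Rightarrow> bool" where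
  "walk E p \<longleftrightarrow> p \<noteq> [] \<and> successively E p"

lemma walk_singleton [simp]: "walk E [v]"
  by (simp add: walk_def)

lemma walk_split:
  "walk E (xs @ v # ys) \<longleftrightarrow> walk E (xs @ [v]) \<and> walk E (v # ys)"
  by (auto simp: walk_def successively_append_iff successively_Cons)

lemma walk_mono: "walk E p \<Longrightarrow> E \<le> F \<Longrightarrow> walk F p"
  unfolding walk_def by (metis predicate2D successively_mono)

definition glue :: "'a list \<Rightarrow> 'a list \<Rightarrow> 'a list" where
  "glue p q = (if last p = hd q then p @ tl q else p @ q)"

lemma
  assumes "walk E p" "walk E q"
  shows walk_glue: "last p = hd q \<or> E (last p) (hd q) \<Longrightarrow> walk E (glue p q)"
    and hd_glue: "hd (glue p q) = hd p"
    and last_glue: "last (glue p q) = last q"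
  using assms
  by (cases q; auto simp: walk_def glue_def successively_append_iff successively_Cons)+

lemma set_glue: "set (glue p q) \<subseteq> set p \<union> set q"
  by (cases q) (auto simp: glue_def)

lemma walk_remove_cycles:
  "walk E p \<Longrightarrow> \<exists>q. walk E q \<and> distinct q \<and> hd q = hd p \<and> last q = last p \<and> set q \<subseteq> set p"
proof (induction "length p" arbitrary: p rule: less_induct)
  case less
  show ?case
  proof (cases "distinct p")
    case False
    then obtain xs v ys zs where p: "p = xs @ [v] @ ys @ [v] @ zs"
      using not_distinct_decomp by blast
    have "walk E (xs @ v # ys @ v # zs)"
      using less.prems p by simp
    then have "walk E (xs @ [v])" "walk E (v # zs)"
      using walk_split[of E xs v "ys @ v # zs"] walk_split[of E "v # ys" v zs] by simp_all
    then have "walk E (xs @ v # zs)"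
      using walk_split[of E xs v zs] by blast
    moreover have "hd (xs @ v # zs) = hd p"
      unfolding p by (cases xs) simp_all
    moreover have "last (xs @ v # zs) = last p"
      unfolding p by (cases zs) simp_all
    moreover have "length (xs @ v # zs) < length p" "set (xs @ v # zs) \<subseteq> set p"
      unfolding p by auto
    ultimately show ?thesis
      using less.hyps[of "xs @ v # zs"] by fastforce
  next
    case True
    with less.prems show ?thesis by auto
  qed
qed

lemma walk_edgeless: "walk E p \<Longrightarrow> (\<And>a b. \<not> E a b) \<Longrightarrow> p = [hd p]"
  by (cases p; cases "tl p") (auto simp: walk_def)

lemma walk_set_subset:
  assumes "walk E p" "hd p \<in> V" "\<And>a b. E a b \<Longrightarrow> a \<in> V \<and> b \<in> V"
  shows "set p \<subseteq> V"
  using assms unfolding walk_def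
  by (induction p rule: induct_list012) (auto simp: successively_Cons)

lemma not_in_butlast_eq_last: "z \<in> set p \<Longrightarrow> z \<notin> set (butlast p) \<Longrightarrow> z = last p"
  by (induction p) (auto split: if_splits)

lemma not_in_tl_eq_hd: "z \<in> set p \<Longrightarrow> z \<notin> set (tl p) \<Longrightarrow> z = hd p"
  by (cases p) auto

definition remove_edge :: "('a \<Rightarrow> 'a \<Rightarrow> bool) \<Rightarrow> 'a \<Rightarrow> 'a \<Rightarrow> 'a \<Rightarrow> 'a \<Rightarrow> bool" where
  "remove_edge E x y = (\<lambda>a b. E a b \<and> (a, b) \<noteq> (x, y))"

lemma remove_edge_le: "remove_edge E x y \<le> E"
  unfolding remove_edge_def by auto

lemma remove_edge_psubset: "E x y \<Longrightarrow> {(a, b). remove_edge E x y a b} \<subset> {(a, b). E a b}"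
  unfolding remove_edge_def by auto

lemma walk_remove_edge:
  "walk E p \<Longrightarrow> x \<notin> set (butlast p) \<or> y \<notin> set (tl p) \<Longrightarrow> walk (remove_edge E x y) p"
  unfolding walk_def remove_edge_def
  by (induction p rule: induct_list012) (auto simp: successively_Cons)

definition st_walk :: "('a \<Rightarrow> 'a \<Rightarrow> bool) \<Rightarrow> 'a set \<Rightarrow> 'a set \<Rightarrow> 'a list \<Rightarrow> bool" where
  "st_walk E S T p \<longleftrightarrow> walk E p \<and> hd p \<in> S \<and> last p \<in> T \<and>
     set (tl p) \<inter> S = {} \<and> set (butlast p) \<inter> T = {}"

lemma walk_trim:
  assumes "walk E p" "hd p \<in> S" "last p \<in> T"
  shows "\<exists>q. st_walk E S T q \<and> distinct q \<and> set q \<subseteq> set p"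
proof -
  obtain p' where p': "walk E p'" "distinct p'" "hd p' \<in> S" "last p' \<in> T" "set p' \<subseteq> set p"
    using walk_remove_cycles[OF assms(1)] assms(2,3) by auto
  then have "\<exists>v\<in>set p'. v \<in> S"
    using hd_in_set[of p'] unfolding walk_def by auto
  then obtain as v bs where split_S: "p' = as @ v # bs" "v \<in> S" "\<forall>z\<in>set bs. z \<notin> S"
    using split_list_last_prop[of p' "\<lambda>v. v \<in> S"] by blast
  have "last (v # bs) \<in> T"
    using split_S(1) p'(4) by simp
  then have "\<exists>w\<in>set (v # bs). w \<in> T"
    using last_in_set[of "v # bs"] by blast
  then obtain cs w ds where split_T: "v # bs = cs @ w # ds" "w \<in> T" "\<forall>z\<in>set cs. z \<notin> T"
    using split_list_first_prop[of "v # bs" "\<lambda>w. w \<in> T"] by blast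
  have "walk E (v # bs)"
    using p'(1) split_S(1) walk_split[of E as v bs] by simp
  then have "walk E (cs @ [w])"
    using split_T(1) walk_split[of E cs w ds] by simp
  moreover have "hd (cs @ [w]) = v"
    using split_T(1) by (cases cs) auto
  moreover have "set (tl (cs @ [w])) \<subseteq> set bs"
    using split_T(1) by (cases cs) auto
  moreover have "distinct (cs @ [w])"
    using p'(2) distinct_append[of cs "w # ds"] unfolding split_S(1) split_T(1)[symmetric] by simp
  moreover have "set (cs @ [w]) \<subseteq> set p"
    using p'(5) split_S(1) split_T(1) by auto
  ultimately show ?thesis
    using split_S(2,3) split_T(2,3) unfolding st_walk_def by (intro exI[of _ "cs @ [w]"]) auto
qed

section \<open>Linkages and separators\<close>

definition linkage :: "('a \<Rightarrow> 'a \<Rightarrow> bool) \<Rightarrow> 'a set \<Rightarrow> 'a set \<Rightarrow> 'a list set \<Rightarrow> bool" where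
  "linkage E S T P \<longleftrightarrow> disjoint_family_on set P \<and> (\<forall>p\<in>P. walk E p \<and> hd p \<in> S \<and> last p \<in> T)"

lemma linkage_mono: "linkage E S T P \<Longrightarrow> E \<le> F \<Longrightarrow> linkage F S T P"
  unfolding linkage_def using walk_mono by blast

lemma disjoint_family_on_shrink:
  assumes "finite P" "disjoint_family_on set P"
    and "\<And>p. p \<in> P \<Longrightarrow> \<exists>q. Q q \<and> q \<noteq> [] \<and> set q \<subseteq> set p"
  shows "\<exists>P'. finite P' \<and> card P' = card P \<and> disjoint_family_on set P' \<and> (\<forall>q\<in>P'. Q q)"
proof -
  obtain f where f: "\<And>p. p \<in> P \<Longrightarrow> Q (f p) \<and> f p \<noteq> [] \<and> set (f p) \<subseteq> set p"
    using assms(3) by metis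
  have disjoint: "set (f p) \<inter> set (f p') = {}" if "p \<in> P" "p' \<in> P" "p \<noteq> p'" for p p'
    using assms(2) f[OF that(1)] f[OF that(2)] that unfolding disjoint_family_on_def by blast
  have "inj_on f P"
    using disjoint f by (metis inf.idem inj_onI set_empty)
  moreover have "disjoint_family_on set (f ` P)"
    unfolding disjoint_family_on_def
  proof (intro ballI impI)
    fix a b assume "a \<in> f ` P" "b \<in> f ` P" "a \<noteq> b"
    then show "set a \<inter> set b = {}"
      using disjoint by (metis imageE)
  qed
  ultimately show ?thesis
    using assms(1) f by (intro exI[of _ "f ` P"]) (auto simp: card_image)
qed

lemma linkage_trim:
  assumes "finite P" "linkage E S T P"
  shows "\<exists>P'. finite P' \<and> card P' = card P \<and> disjoint_family_on set P' \<and>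
           (\<forall>q\<in>P'. st_walk E S T q \<and> distinct q)"
proof -
  have "\<exists>q. (st_walk E S T q \<and> distinct q) \<and> q \<noteq> [] \<and> set q \<subseteq> set p"
    if "p \<in> P" for p
  proof -
    have "walk E p" "hd p \<in> S" "last p \<in> T"
      using assms(2) that unfolding linkage_def by auto
    then obtain q where "st_walk E S T q" "distinct q" "set q \<subseteq> set p"
      using walk_trim by blast
    moreover from this have "q \<noteq> []"
      unfolding st_walk_def walk_def by blast
    ultimately show ?thesis
      by (intro exI[of _ q]) simp
  qed
  then show ?thesis
    using disjoint_family_on_shrink[OF assms(1), of "\<lambda>q. st_walk E S T q \<and> distinct q"] assms(2)
    unfolding linkage_def by blast
qed

lemma linkage_of_indexed_walks:
  assumes "finite I" "\<And>i. i \<in> I \<Longrightarrow> walk E (g i) \<and> hd (g i) \<in> S \<and> last (g i) \<in> T"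
    and "\<And>i j. i \<in> I \<Longrightarrow> j \<in> I \<Longrightarrow> i \<noteq> j \<Longrightarrow> set (g i) \<inter> set (g j) = {}"
  shows "\<exists>R. finite R \<and> card R = card I \<and> linkage E S T R"
proof -
  have "inj_on g I"
    using assms(2,3) unfolding walk_def by (metis inf.idem inj_onI set_empty)
  moreover have "linkage E S T (g ` I)"
    using assms(2,3) unfolding linkage_def disjoint_family_on_def by (metis imageE)
  ultimately show ?thesis
    using assms(1) by (intro exI[of _ "g ` I"]) (simp add: card_image)
qed

definition separates :: "('a \<Rightarrow> 'a \<Rightarrow> bool) \<Rightarrow> 'a set \<Rightarrow> 'a set \<Rightarrow> 'a set \<Rightarrow> bool" where
  "separates E X S T \<longleftrightarrow> (\<forall>p. walk E p \<longrightarrow> hd p \<in> S \<longrightarrow> last p \<in> T \<longrightarrow> set p \<inter> X \<noteq> {})"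

lemma separatesD:
  "separates E X S T \<Longrightarrow> walk E p \<Longrightarrow> hd p \<in> S \<Longrightarrow> last p \<in> T \<Longrightarrow> set p \<inter> X \<noteq> {}"
  unfolding separates_def by blast

lemma separates_remove_edge_insert:
  assumes "separates (remove_edge E x y) Y S T" "v \<in> {x, y}"
  shows "separates E (insert v Y) S T"
  unfolding separates_def
proof (intro allI impI notI)
  fix p assume p: "walk E p" "hd p \<in> S" "last p \<in> T" and avoid: "set p \<inter> insert v Y = {}"
  have "x \<notin> set (butlast p) \<or> y \<notin> set (tl p)"
    using assms(2) avoid in_set_butlastD[of x p] by (cases p) auto
  then have "walk (remove_edge E x y) p"
    by (rule walk_remove_edge[OF p(1)])
  then show False
    using separatesD[OF assms(1) _ p(2,3)] avoid by blast
qed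

lemma separates_prefix_trans:
  assumes "separates E X S T" "x \<in> X" "separates (remove_edge E x y) Z S X"
  shows "separates E Z S T"
  unfolding separates_def
proof (intro allI impI)
  fix p assume p: "walk E p" "hd p \<in> S" "last p \<in> T"
  then have "\<exists>v\<in>set p. v \<in> X"
    using separatesD[OF assms(1)] by blast
  then obtain as v bs where split: "p = as @ v # bs" "v \<in> X" "\<forall>z\<in>set as. z \<notin> X"
    using split_list_first_prop[of p "\<lambda>v. v \<in> X"] by blast
  have "walk E (as @ [v])"
    using p(1) split(1) walk_split[of E as v bs] by simp
  moreover have "x \<notin> set (butlast (as @ [v]))"
    using split(3) assms(2) by auto
  ultimately have "walk (remove_edge E x y) (as @ [v])"
    by (rule walk_remove_edge[OF _ disjI1])
  moreover have "hd (as @ [v]) \<in> S"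
    using p(2) split(1) by (cases as) auto
  ultimately have "set (as @ [v]) \<inter> Z \<noteq> {}"
    by (intro separatesD[OF assms(3)]) (simp_all add: split(2))
  then show "set p \<inter> Z \<noteq> {}"
    using split(1) by auto
qed

lemma separates_suffix_trans:
  assumes "separates E X S T" "y \<in> X" "separates (remove_edge E x y) Z X T"
  shows "separates E Z S T"
  unfolding separates_def
proof (intro allI impI)
  fix p assume p: "walk E p" "hd p \<in> S" "last p \<in> T"
  then have "\<exists>v\<in>set p. v \<in> X"
    using separatesD[OF assms(1)] by blast
  then obtain as v bs where split: "p = as @ v # bs" "v \<in> X" "\<forall>z\<in>set bs. z \<notin> X"
    using split_list_last_prop[of p "\<lambda>v. v \<in> X"] by blast
  have "walk E (v # bs)"
    using p(1) split(1) walk_split[of E as v bs] by simp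
  moreover have "y \<notin> set (tl (v # bs))"
    using split(3) assms(2) by auto
  ultimately have "walk (remove_edge E x y) (v # bs)"
    by (rule walk_remove_edge[OF _ disjI2])
  moreover have "last (v # bs) \<in> T"
    using p(3) split(1) by simp
  ultimately have "set (v # bs) \<inter> Z \<noteq> {}"
    by (intro separatesD[OF assms(3)]) (simp_all add: split(2))
  then show "set p \<inter> Z \<noteq> {}"
    using split(1) by auto
qed

lemma st_walks_meet_in_separator:
  assumes "separates E Y S T" "Y \<subseteq> X" "Y \<subseteq> X'"
    and "st_walk E S X p" "st_walk E X' T q" "z \<in> set p" "z \<in> set q"
  shows "z \<in> Y \<and> z = last p \<and> z = hd q"
proof -
  have p: "walk E p" "hd p \<in> S" "set (butlast p) \<inter> X = {}"
    using assms(4) unfolding st_walk_def by auto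
  have q: "walk E q" "last q \<in> T" "set (tl q) \<inter> X' = {}"
    using assms(5) unfolding st_walk_def by auto
  have "z \<in> Y"
  proof (rule ccontr)
    assume "z \<notin> Y"
    obtain as bs where p_split: "p = as @ z # bs"
      using assms(6) split_list by metis
    obtain cs ds where q_split: "q = cs @ z # ds"
      using assms(7) split_list by metis
    have "set as \<subseteq> set (butlast p)"
      using p_split by (auto simp: butlast_append)
    moreover have "set ds \<subseteq> set (tl q)"
      using q_split by (cases cs) auto
    ultimately have avoid: "set (as @ z # ds) \<inter> Y = {}"
      using p(3) q(3) assms(2,3) \<open>z \<notin> Y\<close> by auto
    have "walk E (as @ [z])" "walk E (z # ds)"
      using p(1) q(1) walk_split[of E as z bs] walk_split[of E cs z ds] p_split q_split by simp_all
    then have "walk E (as @ z # ds)"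
      using walk_split[of E as z ds] by simp
    moreover have "hd (as @ z # ds) \<in> S"
      using p(2) p_split by (cases as) auto
    moreover have "last (as @ z # ds) \<in> T"
      using q(2) q_split by simp
    ultimately show False
      using separatesD[OF assms(1)] avoid by blast
  qed
  moreover have "z = last p"
    using not_in_butlast_eq_last[OF assms(6)] \<open>z \<in> Y\<close> assms(2) p(3) by blast
  moreover have "z = hd q"
    using not_in_tl_eq_hd[OF assms(7)] \<open>z \<in> Y\<close> assms(3) q(3) by blast
  ultimately show ?thesis
    by blast
qed

section \<open>Menger's theorem\<close>

lemma inv_into_disjoint_pick:
  assumes "disjoint_family_on set P" "\<And>p. p \<in> P \<Longrightarrow> f p \<in> set p \<inter> X"
    and "finite X" "card P = card X" "v \<in> X"
  shows "inv_into P f v \<in> P \<and> f (inv_into P f v) = v"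
proof -
  have "inj_on f P"
    using assms(1,2) unfolding inj_on_def disjoint_family_on_def by (metis IntE disjoint_iff)
  then have "card (f ` P) = card X"
    using assms(4) by (simp add: card_image)
  moreover have "f ` P \<subseteq> X"
    using assms(2) by blast
  ultimately have "f ` P = X"
    using card_subset_eq[OF assms(3)] by blast
  then show ?thesis
    using assms(5) by (simp add: inv_into_into f_inv_into_f)
qed

lemma linkage_glue:
  assumes sep: "separates E' Y S T" and sub: "E' \<le> E"
    and edge: "E x y" and "y \<notin> Y" "finite Y"
    and P: "disjoint_family_on set P" "card P = card (insert x Y)"
      "\<forall>p\<in>P. st_walk E' S (insert x Y) p"
    and Q: "disjoint_family_on set Q" "card Q = card (insert y Y)"
      "\<forall>q\<in>Q. st_walk E' (insert y Y) T q"
  shows "\<exists>R. finite R \<and> card R = card (insert x Y) \<and> linkage E S T R"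
proof -
  define p_to where "p_to = inv_into P last"
  define q_from where "q_from = inv_into Q hd"
  have "last p \<in> set p \<inter> insert x Y" if "p \<in> P" for p
    using P(3) that unfolding st_walk_def walk_def by auto
  then have p_to: "p_to v \<in> P \<and> last (p_to v) = v" if "v \<in> insert x Y" for v
    using inv_into_disjoint_pick[OF P(1) _ _ P(2) that] \<open>finite Y\<close> unfolding p_to_def by blast
  have "hd q \<in> set q \<inter> insert y Y" if "q \<in> Q" for q
    using Q(3) that unfolding st_walk_def walk_def by auto
  then have q_from: "q_from v \<in> Q \<and> hd (q_from v) = v" if "v \<in> insert y Y" for v
    using inv_into_disjoint_pick[OF Q(1) _ _ Q(2) that] \<open>finite Y\<close> unfolding q_from_def by blast
  \<comment> \<open>The path ending in x continues across the edge xy; one ending in v \<in> Y continues from v.\<close>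
  define h where "h v = (if v = x then y else v)" for v
  define g where "g v = glue (p_to v) (q_from (h v))" for v
  have h: "h v \<in> insert y Y" if "v \<in> insert x Y" for v
    using that unfolding h_def by auto
  have g: "walk E (g v) \<and> hd (g v) \<in> S \<and> last (g v) \<in> T \<and>
      set (g v) \<subseteq> set (p_to v) \<union> set (q_from (h v))" if v: "v \<in> insert x Y" for v
  proof -
    have p: "walk E (p_to v)" "hd (p_to v) \<in> S" "last (p_to v) = v"
      using p_to[OF v] P(3) walk_mono sub unfolding st_walk_def by blast+
    have q: "walk E (q_from (h v))" "last (q_from (h v)) \<in> T" "hd (q_from (h v)) = h v"
      using q_from[OF h[OF v]] Q(3) walk_mono sub unfolding st_walk_def by blast+
    have "last (p_to v) = hd (q_from (h v)) \<or> E (last (p_to v)) (hd (q_from (h v)))"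
      using p(3) q(3) edge unfolding h_def by auto
    then show ?thesis
      using walk_glue[OF p(1) q(1)] hd_glue[OF p(1) q(1)] last_glue[OF p(1) q(1)]
        set_glue[of "p_to v"] p(2) q(2) unfolding g_def by simp
  qed
  have g_disjoint: "set (g u) \<inter> set (g v) = {}"
    if uv: "u \<in> insert x Y" "v \<in> insert x Y" "u \<noteq> v" for u v
  proof -
    have "set (p_to u) \<inter> set (p_to v) = {}"
      using P(1) p_to uv unfolding disjoint_family_on_def by metis
    moreover have "h u \<noteq> h v"
      using uv \<open>y \<notin> Y\<close> unfolding h_def by auto
    then have "set (q_from (h u)) \<inter> set (q_from (h v)) = {}"
      using Q(1) q_from h uv unfolding disjoint_family_on_def by metis
    moreover have "set (p_to a) \<inter> set (q_from (h b)) = {}"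
      if ab: "a \<in> insert x Y" "b \<in> insert x Y" "a \<noteq> b" for a b
    proof (rule ccontr)
      assume "set (p_to a) \<inter> set (q_from (h b)) \<noteq> {}"
      then obtain z where "z \<in> set (p_to a)" "z \<in> set (q_from (h b))"
        by blast
      then have "z \<in> Y" "z = a" "z = h b"
        using st_walks_meet_in_separator[OF sep _ _ _ _ \<open>z \<in> set (p_to a)\<close>] p_to[OF ab(1)]
          q_from[OF h[OF ab(2)]] P(3) Q(3) by (metis subset_insertI)+
      then show False
        using ab \<open>y \<notin> Y\<close> unfolding h_def by (auto split: if_splits)
    qed
    ultimately show ?thesis
      using g[OF uv(1)] g[OF uv(2)] uv by blast
  qed
  show ?thesis
    using linkage_of_indexed_walks[of "insert x Y" E g S T] g g_disjoint \<open>finite Y\<close> by blast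
qed

lemma linkage_edgeless:
  assumes "\<And>a b. \<not> E a b" "finite S"
    and "\<And>X. finite X \<Longrightarrow> separates E X S T \<Longrightarrow> k \<le> card X"
  shows "\<exists>P. finite P \<and> card P = k \<and> linkage E S T P"
proof -
  have "separates E (S \<inter> T) S T"
    unfolding separates_def
  proof (intro allI impI)
    fix p assume "walk E p" "hd p \<in> S" "last p \<in> T"
    moreover from this have "p = [hd p]"
      using walk_edgeless assms(1) by blast
    ultimately show "set p \<inter> (S \<inter> T) \<noteq> {}"
      by (metis Int_iff empty_iff last.simps list.set_intros(1))
  qed
  then have "k \<le> card (S \<inter> T)"
    using assms(2,3) by simp
  then obtain U where U: "U \<subseteq> S \<inter> T" "card U = k"
    by (meson obtain_subset_with_card_n)
  moreover have "finite U"
    using U(1) assms(2) finite_subset by blast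
  ultimately show ?thesis
    using linkage_of_indexed_walks[of U E "\<lambda>v. [v]" S T] by auto
qed

lemma menger_step:
  assumes edge: "E x y" and Y: "finite Y" "separates (remove_edge E x y) Y S T" "card Y < k"
    and "finite S" and k_bound: "\<And>X. finite X \<Longrightarrow> separates E X S T \<Longrightarrow> k \<le> card X"
    and IH: "\<And>S' T'. finite S' \<Longrightarrow>
      (\<And>X. finite X \<Longrightarrow> separates (remove_edge E x y) X S' T' \<Longrightarrow> k \<le> card X) \<Longrightarrow>
      \<exists>P. finite P \<and> card P = k \<and> linkage (remove_edge E x y) S' T' P"
  shows "\<exists>P. finite P \<and> card P = k \<and> linkage E S T P"
proof -
  define E' where "E' = remove_edge E x y"
  have sep: "separates E (insert x Y) S T" "separates E (insert y Y) S T"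
    using separates_remove_edge_insert[OF Y(2)] by auto
  have k_eq: "card (insert x Y) = k" "card (insert y Y) = k"
    using k_bound[OF _ sep(1)] k_bound[OF _ sep(2)] Y(1,3)
    by (simp_all add: card_insert_if split: if_splits)
  then have "y \<notin> Y"
    using Y(3) by (metis insert_absorb less_irrefl)
  obtain P where P: "finite P" "card P = k" "linkage E' S (insert x Y) P"
    using IH[OF \<open>finite S\<close>] separates_prefix_trans[OF sep(1) insertI1] k_bound
    unfolding E'_def by blast
  obtain Q where Q: "finite Q" "card Q = k" "linkage E' (insert y Y) T Q"
    using IH[of "insert y Y"] separates_suffix_trans[OF sep(2) insertI1] k_bound Y(1)
    unfolding E'_def by blast
  obtain P' where P': "card P' = card (insert x Y)" "disjoint_family_on set P'"
    "\<forall>p\<in>P'. st_walk E' S (insert x Y) p"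
    using linkage_trim[OF P(1,3)] P(2) k_eq by auto
  obtain Q' where Q': "card Q' = card (insert y Y)" "disjoint_family_on set Q'"
    "\<forall>q\<in>Q'. st_walk E' (insert y Y) T q"
    using linkage_trim[OF Q(1,3)] Q(2) k_eq by auto
  show ?thesis
    using linkage_glue[OF Y(2)[folded E'_def] remove_edge_le[of E x y, folded E'_def] edge
        \<open>y \<notin> Y\<close> Y(1) P'(2,1,3) Q'(2,1,3)] k_eq
    by simp
qed

theorem menger:
  assumes "finite {(a, b). E a b}" "finite S"
    and "\<And>X. finite X \<Longrightarrow> separates E X S T \<Longrightarrow> k \<le> card X"
  shows "\<exists>P. finite P \<and> card P = k \<and> linkage E S T P"
  using assms
proof (induction "card {(a, b). E a b}" arbitrary: E S T k rule: less_induct)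
  case less
  show ?case
  proof (cases "\<exists>x y. E x y")
    case False
    then show ?thesis
      using linkage_edgeless[of E S T k] less.prems(2,3) by blast
  next
    case True
    then obtain x y where edge: "E x y"
      by blast
    note fewer_edges = remove_edge_psubset[of E x y, OF edge]
    note IH = less.hyps[OF psubset_card_mono[OF less.prems(1) fewer_edges]
        finite_subset[OF psubset_imp_subset[OF fewer_edges] less.prems(1)]]
    show ?thesis
    proof (cases "\<forall>X. finite X \<longrightarrow> separates (remove_edge E x y) X S T \<longrightarrow> k \<le> card X")
      case True
      then obtain P where P: "finite P" "card P = k" "linkage (remove_edge E x y) S T P"
        using IH[OF less.prems(2)] by blast
      then show ?thesis
        using linkage_mono[OF P(3) remove_edge_le] by blast
    next
      case False
      then obtain Y where "finite Y" "separates (remove_edge E x y) Y S T" "card Y < k"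
        by (auto simp: not_le)
      then show ?thesis
        using menger_step[OF edge _ _ _ less.prems(2,3) IH] by blast
    qed
  qed
qed

section \<open>Brambles\<close>

lemma connected_set_walk:
  assumes "connected_set V E A" "u \<in> A" "v \<in> A"
  shows "\<exists>p. walk E p \<and> hd p = u \<and> last p = v \<and> set p \<subseteq> A"
proof -
  have "(\<lambda>a b. a \<in> A \<and> b \<in> A \<and> E a b)\<^sup>*\<^sup>* u v"
    using assms unfolding connected_set_def by blast
  then show ?thesis
  proof (induction rule: rtranclp_induct)
    case base
    show ?case
      using \<open>u \<in> A\<close> by (intro exI[of _ "[u]"]) simp
  next
    case (step b c)
    then obtain p where p: "walk E p" "hd p = u" "last p = b" "set p \<subseteq> A"
      by blast
    have c: "walk E [c]"
      by simp
    show ?case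
      using walk_glue[OF p(1) c] hd_glue[OF p(1) c] last_glue[OF p(1) c] set_glue[of p "[c]"]
        p step(2)
      by (intro exI[of _ "glue p [c]"]) auto
  qed
qed

lemma touching_connected_sets_walk:
  assumes "connected_set V E A" "connected_set V E C" "touch E A C" "s \<in> A" "t \<in> C"
  shows "\<exists>p. walk E p \<and> hd p = s \<and> last p = t \<and> set p \<subseteq> A \<union> C"
proof -
  obtain a c where ac: "a \<in> A" "c \<in> C" "a = c \<or> E a c"
    using assms(3) unfolding touch_def by blast
  obtain p where p: "walk E p" "hd p = s" "last p = a" "set p \<subseteq> A"
    using connected_set_walk[OF assms(1,4) ac(1)] by blast
  obtain q where q: "walk E q" "hd q = c" "last q = t" "set q \<subseteq> C"
    using connected_set_walk[OF assms(2) ac(2) assms(5)] by blast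
  show ?thesis
    using walk_glue[OF p(1) q(1)] hd_glue[OF p(1) q(1)] last_glue[OF p(1) q(1)]
      set_glue[of p q] p q ac(3)
    by (intro exI[of _ "glue p q"]) auto
qed

lemma bramble_element_avoiding:
  assumes "\<forall>A\<in>B. A \<subseteq> V" "finite X" "card X < bramble_order V B"
  shows "\<exists>A\<in>B. A \<inter> X = {}"
proof (rule ccontr)
  assume "\<not> ?thesis"
  then have "hitting_set V B (X \<inter> V)"
    using assms(1) unfolding hitting_set_def by blast
  then have "bramble_order V B \<le> card (X \<inter> V)"
    unfolding bramble_order_def by (intro Least_le) blast
  also have "\<dots> \<le> card X"
    using assms(2) by (simp add: card_mono)
  finally show False
    using assms(3) by simp
qed

lemma bramble_order_le_separator:
  assumes "bramble V E B" "finite X" "separates E X S T"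
  shows "min (bramble_order V (bramble_restr B S)) (bramble_order V (bramble_restr B T)) \<le> card X"
proof (rule ccontr)
  assume "\<not> ?thesis"
  then have small: "card X < bramble_order V (bramble_restr B S)"
    "card X < bramble_order V (bramble_restr B T)"
    by simp_all
  have "\<forall>A\<in>bramble_restr B R. A \<subseteq> V" for R
    using assms(1) unfolding bramble_def connected_set_def bramble_restr_def by blast
  then obtain A C where A: "A \<in> B" "A \<inter> S \<noteq> {}" "A \<inter> X = {}"
    and C: "C \<in> B" "C \<inter> T \<noteq> {}" "C \<inter> X = {}"
    using bramble_element_avoiding[OF _ assms(2) small(1)]
      bramble_element_avoiding[OF _ assms(2) small(2)]
    unfolding bramble_restr_def by blast
  obtain s t where "s \<in> A" "s \<in> S" "t \<in> C" "t \<in> T"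
    using A(2) C(2) by blast
  moreover have "connected_set V E A" "connected_set V E C" "touch E A C"
    using assms(1) A(1) C(1) unfolding bramble_def by blast+
  ultimately obtain p where "walk E p" "hd p \<in> S" "last p \<in> T" "set p \<subseteq> A \<union> C"
    using touching_connected_sets_walk by metis
  then show False
    using separatesD[OF assms(3)] A(3) C(3) by blast
qed

lemma st_walk_path_from_to:
  assumes "graph V E" "S \<subseteq> V" "st_walk E S T p" "distinct p"
  shows "path_from_to V E S T p"
proof -
  have p: "walk E p" "hd p \<in> S" "last p \<in> T" "set (tl p) \<inter> S = {}" "set (butlast p) \<inter> T = {}"
    using assms(3) unfolding st_walk_def by auto
  have "set p \<subseteq> V"
    using walk_set_subset[OF p(1)] p(2) assms(1,2) unfolding graph_def by blast
  moreover have "p \<noteq> []"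
    using p(1) unfolding walk_def by blast
  moreover have "set p \<inter> S = {hd p}"
    using p(1,2,4) unfolding walk_def by (cases p) auto
  moreover have "set p \<inter> T = {last p}"
    using p(1,3,5) unfolding walk_def by (cases p rule: rev_cases) auto
  ultimately show ?thesis
    using p(1) assms(4)
    unfolding path_from_to_def is_path_def walk_def successively_conv_nth by blast
qed

lemma disjoint_family_on_list:
  assumes "finite P" "disjoint_family_on set P"
  obtains ps where "set ps = P" "length ps = card P"
    "\<And>i j. i < length ps \<Longrightarrow> j < length ps \<Longrightarrow> i \<noteq> j \<Longrightarrow> set (ps ! i) \<inter> set (ps ! j) = {}"
proof -
  obtain ps where ps: "set ps = P" "distinct ps"
    using finite_distinct_list[OF assms(1)] by blast
  moreover have "length ps = card P"
    using distinct_card[OF ps(2)] ps(1) by simp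
  moreover have "set (ps ! i) \<inter> set (ps ! j) = {}"
    if "i < length ps" "j < length ps" "i \<noteq> j" for i j
    using assms(2) ps that unfolding disjoint_family_on_def by (metis nth_eq_iff_index_eq nth_mem)
  ultimately show ?thesis
    using that by blast
qed

theorem lemma2p4:
  fixes V :: "'a set" and E :: "'a \<Rightarrow> 'a \<Rightarrow> bool" and B :: "'a set set"
    and S T :: "'a set" and l :: nat
  assumes "graph V E" and "bramble V E B"
    and "S \<subseteq> V" and "T \<subseteq> V"
    and "bramble_order V (bramble_restr B S) \<ge> l"
    and "bramble_order V (bramble_restr B T) \<ge> l"
  shows "\<exists>ps. length ps = l \<and> (\<forall>p\<in>set ps. path_from_to V E S T p) \<and>
           (\<forall>i<l. \<forall>j<l. i \<noteq> j \<longrightarrow> set (ps ! i) \<inter> set (ps ! j) = {})"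
proof -
  have "finite V" "{(a, b). E a b} \<subseteq> V \<times> V"
    using assms(1) unfolding graph_def by auto
  then have edges: "finite {(a, b). E a b}" and "finite S"
    using assms(3) finite_subset by blast+
  have "l \<le> card X" if "finite X" "separates E X S T" for X
    using bramble_order_le_separator[OF assms(2) that] assms(5,6) by (meson le_trans min.boundedI)
  then obtain P where P: "finite P" "card P = l" "linkage E S T P"
    using menger[OF edges \<open>finite S\<close>] by blast
  then obtain P' where P': "finite P'" "card P' = l" "disjoint_family_on set P'"
    "\<forall>p\<in>P'. st_walk E S T p \<and> distinct p"
    using linkage_trim[OF P(1,3)] by auto
  obtain ps where "set ps = P'" "length ps = l"
    "\<And>i j. i < length ps \<Longrightarrow> j < length ps \<Longrightarrow> i \<noteq> j \<Longrightarrow> set (ps ! i) \<inter> set (ps ! j) = {}"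
    using disjoint_family_on_list[OF P'(1,3)] P'(2) by metis
  then show ?thesis
    using st_walk_path_from_to[OF assms(1,3)] P'(4) by (intro exI[of _ ps]) auto
qed

end
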